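(* In the single-access setting below (i.e. $n=1$), for every $k\ge\max(m,1)$: $\mathrm{Valid}(k)\Rightarrow\mathrm{Valid}(k+1)$. Setting: fix $r\ge0$, a set $V$ of values, one index transformer $e:\mathbb{Z}^r\to\mathbb{Z}$, $m\ge0$ condition predicates $g_1,\dots,g_m:\mathbb{Z}^r\to\{\mathsf{true},\mathsf{false}\}$, a function $F:V\times\{\mathsf{true},\mathsf{false}\}^m\to\{\mathsf{true},\mathsf{false}\}$, and a formula $P\in\Phi_{\wedge,\vee}$ whose atoms are fold-atoms $a_\gamma$, $\gamma:\mathbb{Z}^r\to\{\mathsf{true},\mathsf{false}\}$. Define $\mathrm{Valid}(k)$ to be: for all $u:[k]\to\mathbb{Z}^r$ and all $X:\mathbb{Z}^{[k]}\to V$, if $P^k(u)$ then $F\big(X(\alpha(u)),\mathrm{fold}_k(g_1,u),\dots,\mathrm{fold}_k(g_m,u)\big)=\mathsf{true}$, where $\alpha(u):[k]\to\mathbb{Z}$, $j\mapsto e(u(j))$.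
   Context: $[k]=\{1,\dots,k\}$. For $\gamma:A\to\{\mathsf{true},\mathsf{false}\}$ and $u:[k]\to A$, $\mathrm{fold}_k(\gamma,u)=\bigwedge_{j\in[k]}\gamma(u(j))$. $\Phi_{\wedge,\vee}$ is the set of negation-free formulas built from atoms with $\wedge,\vee$, and $P^k(u)$ is the truth value of $P$ when each atom $a_\gamma$ is interpreted as $\mathrm{fold}_k(\gamma,u)$. Interpretation in the paper: $k$ is the rank of the single aggregated axis of a rewrite rule; $u$ bundles all integer maps on that axis (tensor shape, operator attributes, the output access); $P$ encodes precondition, validity of the LHS expression and validity of the access; $X$ is the input tensor; $F$ is the scalar function ("scalarf") comparing LHS and RHS values; $\mathrm{Valid}(k)$ says the rule holds at rank $k$. *)

theory Defs
  imports Main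
begin

text \<open>Points of Z^r are represented as int lists of length r; maps [k] -> Z (elements
of Z^[k]) as int lists of length k (entry j-1 = value at j).\<close>

definition foldk :: "nat \<Rightarrow> ('c \<Rightarrow> bool) \<Rightarrow> (nat \<Rightarrow> 'c) \<Rightarrow> bool" where
  "foldk k \<gamma> u = (\<forall>j\<in>{1..k}. \<gamma> (u j))"

datatype 'c pform = Atom "'c \<Rightarrow> bool" | PAnd "'c pform" "'c pform" | POr "'c pform" "'c pform"

fun peval :: "'c pform \<Rightarrow> nat \<Rightarrow> (nat \<Rightarrow> 'c) \<Rightarrow> bool" where
  "peval (Atom \<gamma>) k u = foldk k \<gamma> u"
| "peval (PAnd p q) k u = (peval p k u \<and> peval q k u)"
| "peval (POr p q) k u = (peval p k u \<or> peval q k u)"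

text \<open>Valid(k). gs = [g_1,...,g_m]; F takes a value and an m-tuple of booleans (as a list).\<close>
definition Valid ::
  "nat \<Rightarrow> 'v set \<Rightarrow> (int list \<Rightarrow> int) \<Rightarrow> (int list \<Rightarrow> bool) list \<Rightarrow>
   ('v \<Rightarrow> bool list \<Rightarrow> bool) \<Rightarrow> int list pform \<Rightarrow> nat \<Rightarrow> bool" where
  "Valid r V e gs F P k =
    (\<forall>u :: nat \<Rightarrow> int list. (\<forall>j\<in>{1..k}. length (u j) = r) \<longrightarrow>
      (\<forall>X :: int list \<Rightarrow> 'v. (\<forall>xs. length xs = k \<longrightarrow> X xs \<in> V) \<longrightarrow>
        peval P k u \<longrightarrow>
        F (X (map (\<lambda>j. e (u j)) [1..<k+1])) (map (\<lambda>g. foldk k g u) gs)))"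

end

theory Submission
  imports Defs
begin

text \<open>Given u on [k+1], every g_i whose fold fails has a failure witness in [k+1]. As m \<le> k,
  some \<sigma> : [k] \<rightarrow> [k+1] hits all these witnesses, so the folds of the g_i along u \<circ> \<sigma>
  equal those along u. Restricting along \<sigma> preserves every fold-atom, hence every negation-free
  P. Finally X is arbitrary, so the value fed to F ranges over all of V and Valid(k), applied to
  u \<circ> \<sigma> with a constant input, yields the claim.\<close>

lemma foldk_reindex:
  assumes "\<forall>j\<in>{1..k}. \<sigma> j \<in> {1..k'}" and "foldk k' \<gamma> u"
  shows "foldk k \<gamma> (u \<circ> \<sigma>)"
  using assms by (auto simp: foldk_def)

lemma peval_reindex:
  assumes "\<forall>j\<in>{1..k}. \<sigma> j \<in> {1..k'}" and "peval P k' u"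
  shows "peval P k (u \<circ> \<sigma>)"
  using assms by (induction P) (auto simp: foldk_def)

lemma foldk_witness:
  assumes "1 \<le> k"
  shows "\<exists>j\<in>{1..k}. \<gamma> (u j) \<longrightarrow> foldk k \<gamma> u"
  using assms by (cases "foldk k \<gamma> u") (auto simp: foldk_def)

lemma exists_reindex_preserving_folds:
  assumes "length gs \<le> k" and "1 \<le> k'"
  obtains \<sigma> where "\<forall>j\<in>{1..k}. \<sigma> j \<in> {1..k'}"
    and "\<forall>g\<in>set gs. foldk k g (u \<circ> \<sigma>) = foldk k' g u"
proof -
  have "\<forall>i. \<exists>j. j \<in> {1..k'} \<and> ((gs ! i) (u j) \<longrightarrow> foldk k' (gs ! i) u)"
    using foldk_witness[OF assms(2)] by blast
  then obtain w where w: "\<And>i. w i \<in> {1..k'}" "\<And>i. (gs ! i) (u (w i)) \<Longrightarrow> foldk k' (gs ! i) u"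
    by metis
  define \<sigma> where "\<sigma> j = (if j \<le> length gs then w (j - 1) else 1)" for j
  have \<sigma>_range: "\<forall>j\<in>{1..k}. \<sigma> j \<in> {1..k'}"
    using w(1) assms(2) by (simp add: \<sigma>_def)
  have "foldk k g (u \<circ> \<sigma>) = foldk k' g u" if "g \<in> set gs" for g
  proof
    assume fold_\<sigma>: "foldk k g (u \<circ> \<sigma>)"
    obtain i where i: "i < length gs" "gs ! i = g"
      using \<open>g \<in> set gs\<close> by (meson in_set_conv_nth)
    have "g (u (\<sigma> (Suc i)))"
      using fold_\<sigma> i assms(1) by (auto simp: foldk_def)
    then show "foldk k' g u"
      using w(2)[of i] i by (simp add: \<sigma>_def)
  qed (rule foldk_reindex[OF \<sigma>_range])
  with \<sigma>_range that show thesis by blast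
qed

lemma Valid_imp_F:
  assumes "Valid r V e gs F P k" and "x \<in> V"
    and "\<forall>j\<in>{1..k}. length (u j) = r" and "peval P k u"
  shows "F x (map (\<lambda>g. foldk k g u) gs)"
  using assms(1)[unfolded Valid_def, rule_format, of u "\<lambda>_. x"] assms(2-) by simp

theorem mainTheorem3:
  fixes r :: nat and V :: "'v set" and e :: "int list \<Rightarrow> int"
    and gs :: "(int list \<Rightarrow> bool) list" and F :: "'v \<Rightarrow> bool list \<Rightarrow> bool"
    and P :: "int list pform" and k :: nat
  assumes "k \<ge> max (length gs) 1"
    and "Valid r V e gs F P k"
  shows "Valid r V e gs F P (k + 1)"
  unfolding Valid_def
proof (intro allI impI)
  fix u :: "nat \<Rightarrow> int list" and X :: "int list \<Rightarrow> 'v"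
  assume len: "\<forall>j\<in>{1..k+1}. length (u j) = r"
    and XV: "\<forall>xs. length xs = k + 1 \<longrightarrow> X xs \<in> V"
    and Pu: "peval P (k + 1) u"
  obtain \<sigma> where \<sigma>_range: "\<forall>j\<in>{1..k}. \<sigma> j \<in> {1..k+1}"
    and "\<forall>g\<in>set gs. foldk k g (u \<circ> \<sigma>) = foldk (k+1) g u"
    using exists_reindex_preserving_folds[of gs k "k+1" u] assms(1) by auto
  then have folds_eq: "map (\<lambda>g. foldk k g (u \<circ> \<sigma>)) gs = map (\<lambda>g. foldk (k+1) g u) gs"
    by simp
  have "F (X (map (\<lambda>j. e (u j)) [1..<k+1+1])) (map (\<lambda>g. foldk k g (u \<circ> \<sigma>)) gs)"
    using Valid_imp_F[OF assms(2)] XV len \<sigma>_range peval_reindex[OF \<sigma>_range Pu] by simp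
  then show "F (X (map (\<lambda>j. e (u j)) [1..<k+1+1])) (map (\<lambda>g. foldk (k+1) g u) gs)"
    by (simp only: folds_eq)
qed

end
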